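(* Let $-\infty\le l<r\le+\infty$, let $D$ be an interval with endpoints $l$ and $r$ (each endpoint may or may not belong to $D$), and write $\mathcal I=(l,r)$. Let $X_t$ be a regular diffusion with values in $D$ solving $dX_t=a(X_t)\,dt+\sigma(X_t)\,dw_t$, $X_0=x$, where $w_t$ is a standard Wiener process, $a:D\to\mathbb R$, $\sigma:D\to\mathbb R_+$, and for every $x\in\mathcal I$ there is $\varepsilon>0$ with $\int_{x-\varepsilon}^{x+\varepsilon}\frac{1+|a(y)|}{\sigma^2(y)}\,dy<\infty$. Let $\rho>0$ be a discount rate and $I$ an investment cost with $I<r$. Let $\psi$ be an increasing positive fundamental solution on $\mathcal I$ of $a(x)f'(x)+\frac12\sigma^2(x)f''(x)=\rho f(x)$. For $p\in\mathcal I$ let $\tau_p=\inf\{t\ge0: X_t\ge p\}$ and $$V(p;x)=\mathbb E^x\big[(X_{\tau_p}-I)e^{-\rho\tau_p}\mathbf 1_{\{\tau_p<\infty\}}\big]$$ (so $V(p;x)=x-I$ for $x\ge p$ and $V(p;x)=(p-I)\mathbb E^x e^{-\rho\tau_p}$ for $x<p$). Then a threshold $p^*\in\mathcal I$ satisfies $V(p^*;x)\ge V(p;x)$ for all $p\in\mathcal I$ and all $x\in\mathcal I$ if and only if (i) $\frac{p-I}{\psi(p)}\le\frac{p^*-I}{\psi(p^* )}$ whenever $p<p^*$ (with $p\in\mathcal I$), and (ii) the function $p\mapsto\frac{p-I}{\psi(p)}$ does not increase on $\{p\in\mathcal I: p\ge p^*\}$.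
   Context: $\mathbb E^x$ denotes expectation for the process started at $x$. Regularity means that from any $x\in\mathcal I$ the process reaches any $y\in\mathcal I$ in finite time with positive probability. The increasing fundamental solution $\psi$ (unique up to a positive multiplicative constant, with absolutely continuous derivative, solving the ODE a.e. on $\mathcal I$, and satisfying $0<\psi<\infty$ on $\mathcal I$) satisfies $\mathbb E^x e^{-\rho T_p}=\psi(x)/\psi(p)$ for $x<p$, where $T_p$ is the first hitting time of $p$. *)

theory Defs
  imports "HOL-Probability.Probability"
begin

definition open_int :: "ereal \<Rightarrow> ereal \<Rightarrow> real set" where
  "open_int l r = {x. l < ereal x \<and> ereal x < r}"

definition entrance_time :: "(real \<Rightarrow> 'w \<Rightarrow> real) \<Rightarrow> real \<Rightarrow> 'w \<Rightarrow> ereal" where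
  "entrance_time X p w = Inf (ereal ` {t. 0 \<le> t \<and> p \<le> X t w})"

definition hitting_time :: "(real \<Rightarrow> 'w \<Rightarrow> real) \<Rightarrow> real \<Rightarrow> 'w \<Rightarrow> ereal" where
  "hitting_time X y w = Inf (ereal ` {t. 0 \<le> t \<and> X t w = y})"

definition disc_payoff :: "(real \<Rightarrow> 'w \<Rightarrow> real) \<Rightarrow> real \<Rightarrow> real \<Rightarrow> real \<Rightarrow> 'w \<Rightarrow> real" where
  "disc_payoff X \<rho> I p w =
     (let \<tau> = entrance_time X p w in
      if \<tau> < \<infinity> then (X (real_of_ereal \<tau>) w - I) * exp (- \<rho> * real_of_ereal \<tau>) else 0)"

definition value_fn :: "(real \<Rightarrow> 'w measure) \<Rightarrow> (real \<Rightarrow> 'w \<Rightarrow> real) \<Rightarrow> real \<Rightarrow> real \<Rightarrow> real \<Rightarrow> real \<Rightarrow> real" where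
  "value_fn M X \<rho> I p x = integral\<^sup>L (M x) (disc_payoff X \<rho> I p)"

end

theory Submission
  imports Defs
begin

text \<open>
  Because the paths are continuous, a path started below p first enters [p, \<infinity>) exactly when it
  hits p, and there it takes the value p. Hence V(p;x) = x - I for x \<ge> p and
  V(p;x) = (p - I) \<psi>(x)/\<psi>(p) for x < p, i.e. V(p;x) = \<psi>(x) f(max p x) with f(q) = (q - I)/\<psi>(q).
  Since \<psi> > 0, optimality of p* for every starting point amounts to
  f(max p x) \<le> f(max p* x) for all p, x, which is an elementary property of f alone.
\<close>

definition discount :: "real \<Rightarrow> ereal \<Rightarrow> real" where
  "discount \<rho> \<tau> = (if \<tau> < \<infinity> then exp (- \<rho> * real_of_ereal \<tau>) else 0)"

lemma threshold_max_optimal_iff: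
  fixes f :: "'a::linorder \<Rightarrow> 'b::linorder"
  assumes "s \<in> S"
  shows "(\<forall>p\<in>S. \<forall>x\<in>S. f (max p x) \<le> f (max s x)) \<longleftrightarrow>
         (\<forall>p\<in>S. p < s \<longrightarrow> f p \<le> f s) \<and> (\<forall>p\<in>S. \<forall>q\<in>S. s \<le> p \<longrightarrow> p \<le> q \<longrightarrow> f q \<le> f p)"
proof safe
  fix p assume "\<forall>p\<in>S. \<forall>x\<in>S. f (max p x) \<le> f (max s x)" "p \<in> S" "p < s"
  then show "f p \<le> f s" by (metis max.idem max.strict_order_iff)
next
  fix p q assume "\<forall>p\<in>S. \<forall>x\<in>S. f (max p x) \<le> f (max s x)" "p \<in> S" "q \<in> S" "s \<le> p" "p \<le> q"
  then show "f q \<le> f p" by (metis max.absorb1 max.absorb2)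
next
  fix p x
  assume lower: "\<forall>p\<in>S. p < s \<longrightarrow> f p \<le> f s"
    and upper: "\<forall>p\<in>S. \<forall>q\<in>S. s \<le> p \<longrightarrow> p \<le> q \<longrightarrow> f q \<le> f p"
    and "p \<in> S" "x \<in> S"
  then have "max p x \<in> S" by (simp add: max_def)
  then show "f (max p x) \<le> f (max s x)"
    using lower upper \<open>x \<in> S\<close> \<open>s \<in> S\<close> by (cases "x \<le> s"; cases "max p x < s") (auto simp: max_def)
qed

lemma entrance_time_nonneg:
  fixes X :: "real \<Rightarrow> 'w \<Rightarrow> real"
  shows "0 \<le> entrance_time X p w"
  unfolding entrance_time_def by (rule Inf_greatest) auto

lemma entrance_time_eq_0:
  fixes X :: "real \<Rightarrow> 'w \<Rightarrow> real"
  assumes "p \<le> X 0 w"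
  shows "entrance_time X p w = 0"
  unfolding entrance_time_def zero_ereal_def
  by (rule Inf_eqI) (use assms in auto)

lemma entrance_set_Inf_mem:
  fixes X :: "real \<Rightarrow> 'w \<Rightarrow> real"
  assumes cont: "continuous_on {0..} (\<lambda>t. X t w)"
    and ne: "{t. 0 \<le> t \<and> p \<le> X t w} \<noteq> {}"
  shows "Inf {t. 0 \<le> t \<and> p \<le> X t w} \<in> {t. 0 \<le> t \<and> p \<le> X t w}"
proof -
  have eq: "{t. 0 \<le> t \<and> p \<le> X t w} = {0..} \<inter> (\<lambda>t. X t w) -` {p..}" by auto
  have "closed ({0..} \<inter> (\<lambda>t. X t w) -` {p..})"
    by (rule continuous_closed_preimage[OF cont]) (auto intro: closed_atLeast)
  then show ?thesis using ne unfolding eq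
    by (intro closed_contains_Inf) (auto simp: bdd_below_def)
qed

lemma entrance_time_eq_Inf:
  fixes X :: "real \<Rightarrow> 'w \<Rightarrow> real"
  assumes cont: "continuous_on {0..} (\<lambda>t. X t w)"
    and ne: "{t. 0 \<le> t \<and> p \<le> X t w} \<noteq> {}"
  shows "entrance_time X p w = ereal (Inf {t. 0 \<le> t \<and> p \<le> X t w})"
  unfolding entrance_time_def
  using entrance_set_Inf_mem[where X=X and w=w, OF cont ne]
  by (intro Inf_eqI) (auto intro!: cInf_lower simp: bdd_below_def)

lemma entrance_time_eq_infinity:
  fixes X :: "real \<Rightarrow> 'w \<Rightarrow> real"
  assumes "{t. 0 \<le> t \<and> p \<le> X t w} = {}"
  shows "entrance_time X p w = \<infinity>"
  unfolding entrance_time_def assms by (simp add: top_ereal_def)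

lemma entrance_time_le_iff:
  fixes X :: "real \<Rightarrow> 'w \<Rightarrow> real"
  assumes cont: "continuous_on {0..} (\<lambda>t. X t w)"
  shows "entrance_time X p w \<le> ereal t \<longleftrightarrow> (\<exists>s\<in>{0..t}. p \<le> X s w)"
proof (cases "{t. 0 \<le> t \<and> p \<le> X t w} = {}")
  case True
  then show ?thesis by (auto simp: entrance_time_eq_infinity)
next
  case False
  let ?S = "{t. 0 \<le> t \<and> p \<le> X t w}"
  have "Inf ?S \<in> ?S" by (rule entrance_set_Inf_mem[where X=X and w=w, OF cont False])
  moreover have "Inf ?S \<le> s" if "s \<in> ?S" for s
    using that by (intro cInf_lower) (auto simp: bdd_below_def)
  ultimately show ?thesis
    by (force simp: entrance_time_eq_Inf[where X=X and w=w, OF cont False])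
qed

text \<open>Started below p, a continuous path reaches [p, \<infinity>) only through p itself (intermediate values).\<close>

lemma entrance_time_hits_level:
  fixes X :: "real \<Rightarrow> 'w \<Rightarrow> real"
  assumes cont: "continuous_on {0..} (\<lambda>t. X t w)" and below: "X 0 w < p"
  shows "hitting_time X p w = entrance_time X p w"
    and "entrance_time X p w < \<infinity> \<Longrightarrow> X (real_of_ereal (entrance_time X p w)) w = p"
proof -
  let ?S = "{t. 0 \<le> t \<and> p \<le> X t w}"
  have "hitting_time X p w = entrance_time X p w \<and>
        (entrance_time X p w < \<infinity> \<longrightarrow> X (real_of_ereal (entrance_time X p w)) w = p)"
  proof (cases "?S = {}")
    case True
    then have never_hits: "{t. 0 \<le> t \<and> X t w = p} = {}" by auto
    have "hitting_time X p w = \<infinity>"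
      unfolding hitting_time_def never_hits by (simp add: top_ereal_def)
    then show ?thesis using True by (simp add: entrance_time_eq_infinity)
  next
    case False
    define s0 where "s0 = Inf ?S"
    have s0: "0 \<le> s0" "p \<le> X s0 w"
      using entrance_set_Inf_mem[where X=X and w=w, OF cont False] by (auto simp: s0_def)
    have least: "s0 \<le> s" if "s \<in> ?S" for s
      unfolding s0_def using that by (intro cInf_lower) (auto simp: bdd_below_def)
    have "continuous_on {0..s0} (\<lambda>t. X t w)" by (rule continuous_on_subset[OF cont]) auto
    then obtain u where u: "0 \<le> u" "u \<le> s0" "X u w = p"
      using IVT'[of "\<lambda>t. X t w" 0 p s0] s0 below by auto
    with least have hit: "X s0 w = p" by force
    have "hitting_time X p w = ereal s0"
      unfolding hitting_time_def by (rule Inf_eqI) (use s0 hit least in auto)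
    then show ?thesis
      using hit entrance_time_eq_Inf[where X=X and w=w, OF cont False] by (simp add: s0_def)
  qed
  then show "hitting_time X p w = entrance_time X p w"
    and "entrance_time X p w < \<infinity> \<Longrightarrow> X (real_of_ereal (entrance_time X p w)) w = p"
    by auto
qed

lemma disc_payoff_eq:
  fixes X :: "real \<Rightarrow> 'w \<Rightarrow> real"
  assumes cont: "continuous_on {0..} (\<lambda>t. X t w)"
  shows "disc_payoff X \<rho> I p w =
           (if p \<le> X 0 w then X 0 w - I else (p - I) * discount \<rho> (entrance_time X p w))"
  using entrance_time_hits_level(2)[where X=X and w=w, OF cont]
  by (auto simp: disc_payoff_def discount_def entrance_time_eq_0 Let_def)

text \<open>On a continuous path the supremum over [0, t] is attained and equals the supremum over the rationals.\<close>

lemma exists_ge_iff_rational_approx: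
  fixes g :: "real \<Rightarrow> real"
  assumes cont: "continuous_on {0..t} g" and t: "0 \<le> t"
  shows "(\<exists>s\<in>{0..t}. p \<le> g s) \<longleftrightarrow> (\<forall>n::nat. \<exists>q\<in>\<rat> \<inter> {0..t}. p - 1 / Suc n < g q)"
proof
  assume "\<exists>s\<in>{0..t}. p \<le> g s"
  then obtain s where s: "s \<in> {0..t}" "p \<le> g s" by auto
  show "\<forall>n::nat. \<exists>q\<in>\<rat> \<inter> {0..t}. p - 1 / Suc n < g q"
  proof
    fix n :: nat
    have "{q \<in> {0..t}. p - 1 / Suc n < g q} = {0..t} \<inter> g -` {p - 1 / Suc n<..}" by auto
    moreover have "openin (top_of_set {0..t}) ({0..t} \<inter> g -` {p - 1 / Suc n<..})"
      by (rule continuous_openin_preimage_gen[OF cont]) auto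
    ultimately obtain U where U: "open U" "{q \<in> {0..t}. p - 1 / Suc n < g q} = {0..t} \<inter> U"
      by (metis openin_open)
    have "0 < 1 / real (Suc n)" by simp
    with s(2) have "p - 1 / Suc n < g s" by linarith
    then have "s \<in> U" using U(2) s(1) by blast
    then obtain e where e: "e > 0" "ball s e \<subseteq> U" using U(1) open_contains_ball by blast
    have "max 0 (s - e) < min t (s + e) \<or> t = 0" using e s by auto
    then obtain q where q: "q \<in> \<rat>" "q \<in> {0..t}" "q \<in> ball s e"
    proof
      assume "max 0 (s - e) < min t (s + e)"
      then obtain q where "q \<in> \<rat>" "max 0 (s - e) < q" "q < min t (s + e)"
        using Rats_dense_in_real by blast
      then show thesis by (intro that[of q]) (auto simp: dist_real_def)
    next
      assume "t = 0"
      then show thesis using s e by (intro that[of 0]) auto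
    qed
    then show "\<exists>q\<in>\<rat> \<inter> {0..t}. p - 1 / Suc n < g q" using U(2) e by blast
  qed
next
  assume approx: "\<forall>n::nat. \<exists>q\<in>\<rat> \<inter> {0..t}. p - 1 / Suc n < g q"
  obtain s where s: "s \<in> {0..t}" "\<And>y. y \<in> {0..t} \<Longrightarrow> g y \<le> g s"
    using continuous_attains_sup[OF _ _ cont] t by auto
  have "p \<le> g s"
  proof (rule ccontr)
    assume "\<not> p \<le> g s"
    then obtain n :: nat where "1 / Suc n < p - g s"
      by (metis diff_gt_0_iff_gt nat_approx_posE not_le)
    moreover obtain q where "q \<in> {0..t}" "p - 1 / Suc n < g q" using approx by blast
    ultimately show False using s(2)[of q] by auto
  qed
  then show "\<exists>s\<in>{0..t}. p \<le> g s" using s by blast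
qed

lemma entrance_time_measurable:
  fixes X :: "real \<Rightarrow> 'w \<Rightarrow> real"
  assumes meas: "\<And>t. t \<ge> 0 \<Longrightarrow> X t \<in> borel_measurable N"
    and cont: "\<And>w. continuous_on {0..} (\<lambda>t. X t w)"
  shows "entrance_time X p \<in> borel_measurable N"
proof (rule borel_measurableI_le)
  fix y :: ereal
  show "{w \<in> space N. entrance_time X p w \<le> y} \<in> sets N"
  proof (cases "\<exists>t\<ge>0. y = ereal t")
    case True
    then obtain t where t: "0 \<le> t" "y = ereal t" by blast
    have cont_t: "continuous_on {0..t} (\<lambda>s. X s w)" for w
      by (rule continuous_on_subset[OF cont]) auto
    have "{w \<in> space N. entrance_time X p w \<le> y} =
          (\<Inter>n::nat. \<Union>q\<in>\<rat> \<inter> {0..t}. {w \<in> space N. p - 1 / Suc n < X q w})"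
      using entrance_time_le_iff[where X=X, OF cont] exists_ge_iff_rational_approx[OF cont_t t(1)] t(2)
      by auto
    also have "\<dots> \<in> sets N"
    proof -
      have "{w \<in> space N. p - 1 / Suc n < X q w} \<in> sets N" if "q \<in> \<rat> \<inter> {0..t}" for n :: nat and q
      proof -
        have "X q \<in> borel_measurable N" using meas that by auto
        then show ?thesis by measurable
      qed
      then have "(\<Union>q\<in>\<rat> \<inter> {0..t}. {w \<in> space N. p - 1 / Suc n < X q w}) \<in> sets N" for n :: nat
        by (intro sets.countable_UN'') (auto simp: countable_rat)
      then show ?thesis by (intro sets.countable_INT) auto
    qed
    finally show ?thesis .
  next
    case False
    then consider "y = \<infinity>" | "y < 0"
      by (cases y) (auto simp: not_le)
    then show ?thesis
    proof cases
      case 1 then show ?thesis by simp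
    next
      case 2
      then have "{w \<in> space N. entrance_time X p w \<le> y} = {}"
        using entrance_time_nonneg[of X p] by (force dest: order.trans)
      then show ?thesis by (metis sets.empty_sets)
    qed
  qed
qed

lemma disc_payoff_measurable:
  fixes X :: "real \<Rightarrow> 'w \<Rightarrow> real"
  assumes meas: "\<And>t. t \<ge> 0 \<Longrightarrow> X t \<in> borel_measurable N"
    and cont: "\<And>w. continuous_on {0..} (\<lambda>t. X t w)"
  shows "disc_payoff X \<rho> I p \<in> borel_measurable N"
proof -
  have [measurable]: "entrance_time X p \<in> borel_measurable N"
    by (rule entrance_time_measurable[OF meas cont])
  have [measurable]: "X 0 \<in> borel_measurable N" using meas by auto
  have "(\<lambda>w. if p \<le> X 0 w then X 0 w - I else (p - I) * discount \<rho> (entrance_time X p w))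
          \<in> borel_measurable N"
    unfolding discount_def by measurable
  moreover have "disc_payoff X \<rho> I p =
      (\<lambda>w. if p \<le> X 0 w then X 0 w - I else (p - I) * discount \<rho> (entrance_time X p w))"
    by (rule ext) (rule disc_payoff_eq[where X=X, OF cont])
  ultimately show ?thesis by simp
qed

lemma value_of_threshold:
  fixes X :: "real \<Rightarrow> 'w \<Rightarrow> real"
  assumes P: "prob_space N"
    and meas: "\<And>t. t \<ge> 0 \<Longrightarrow> X t \<in> borel_measurable N"
    and cont: "\<And>w. continuous_on {0..} (\<lambda>t. X t w)"
    and start: "AE w in N. X 0 w = x"
    and laplace: "x < p \<Longrightarrow> has_bochner_integral N (\<lambda>w. discount \<rho> (hitting_time X p w)) c"
  shows "integral\<^sup>L N (disc_payoff X \<rho> I p) = (if p \<le> x then x - I else (p - I) * c)"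
proof (cases "p \<le> x")
  case True
  have "AE w in N. disc_payoff X \<rho> I p w = x - I"
    using start by eventually_elim (use True in \<open>simp add: disc_payoff_eq[where X=X, OF cont]\<close>)
  then have "integral\<^sup>L N (disc_payoff X \<rho> I p) = integral\<^sup>L N (\<lambda>_. x - I)"
    by (intro integral_cong_AE disc_payoff_measurable[OF meas cont]) auto
  then show ?thesis using True prob_space.prob_space[OF P] by simp
next
  case False
  let ?h = "\<lambda>w. discount \<rho> (hitting_time X p w)"
  have h: "has_bochner_integral N ?h c" using laplace False by simp
  have "AE w in N. disc_payoff X \<rho> I p w = (p - I) * ?h w"
    using start
    by eventually_elim (use False entrance_time_hits_level(1)[where X=X, OF cont] in \<open>simp add: disc_payoff_eq[where X=X, OF cont]\<close>)
  then have "integral\<^sup>L N (disc_payoff X \<rho> I p) = integral\<^sup>L N (\<lambda>w. (p - I) * ?h w)"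
    using borel_measurable_has_bochner_integral[OF h]
    by (intro integral_cong_AE disc_payoff_measurable[OF meas cont]) auto
  also have "\<dots> = (p - I) * c" using has_bochner_integral_integral_eq[OF h] by simp
  finally show ?thesis using False by simp
qed

theorem theorem1:
  fixes l r :: ereal and D :: "real set"
    and M :: "real \<Rightarrow> 'w measure" and X :: "real \<Rightarrow> 'w \<Rightarrow> real"
    and a \<sigma> :: "real \<Rightarrow> real"
    and \<rho> I :: real
    and \<psi> \<psi>' \<psi>'' :: "real \<Rightarrow> real"
    and pstar :: real
  assumes lr: "l < r"
    and D_int: "is_interval D"
    and D_sub: "D \<subseteq> {x. l \<le> ereal x \<and> ereal x \<le> r}"
    and D_sup: "open_int l r \<subseteq> D"
    \<comment> \<open>coefficients\<close>
    and sigma_pos: "\<forall>y\<in>D. \<sigma> y > 0"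
    and loc_int: "\<forall>x\<in>open_int l r. \<exists>\<epsilon>>0.
                    (\<lambda>y. (1 + \<bar>a y\<bar>) / (\<sigma> y)\<^sup>2) integrable_on {x - \<epsilon>..x + \<epsilon>}"
    \<comment> \<open>the diffusion: a family of laws P^x on a common sample space\<close>
    and prob: "\<forall>x\<in>open_int l r. prob_space (M x)"
    and meas: "\<forall>x\<in>open_int l r. \<forall>t\<ge>0. X t \<in> borel_measurable (M x)"
    and cont_paths: "\<forall>w. continuous_on {0..} (\<lambda>t. X t w)"
    and in_D: "\<forall>w. \<forall>t\<ge>0. X t w \<in> D"
    and start: "\<forall>x\<in>open_int l r. AE w in M x. X 0 w = x"
    and regular: "\<forall>x\<in>open_int l r. \<forall>y\<in>open_int l r.
                    0 < measure (M x) {w \<in> space (M x). hitting_time X y w < \<infinity>}"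
    \<comment> \<open>discount rate and investment cost\<close>
    and rho_pos: "\<rho> > 0"
    and I_lt: "ereal I < r"
    \<comment> \<open>increasing positive fundamental solution psi\<close>
    and psi_pos: "\<forall>x\<in>open_int l r. 0 < \<psi> x"
    and psi_mono: "mono_on (open_int l r) \<psi>"
    and psi_deriv: "\<forall>x\<in>open_int l r. (\<psi> has_real_derivative \<psi>' x) (at x)"
    and psi'_ac: "\<forall>u\<in>open_int l r. \<forall>v\<in>open_int l r. u \<le> v \<longrightarrow>
                    \<psi>'' absolutely_integrable_on {u..v} \<and> (\<psi>'' has_integral (\<psi>' v - \<psi>' u)) {u..v}"
    and psi_ode: "AE y in lebesgue. y \<in> open_int l r \<longrightarrow>
                    a y * \<psi>' y + (1/2) * (\<sigma> y)\<^sup>2 * \<psi>'' y = \<rho> * \<psi> y"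
    and laplace: "\<forall>x\<in>open_int l r. \<forall>p\<in>open_int l r. x < p \<longrightarrow>
                    has_bochner_integral (M x)
                      (\<lambda>w. if hitting_time X p w < \<infinity>
                           then exp (- \<rho> * real_of_ereal (hitting_time X p w)) else 0)
                      (\<psi> x / \<psi> p)"
    and pstar_in: "pstar \<in> open_int l r"
  shows "(\<forall>p\<in>open_int l r. \<forall>x\<in>open_int l r. value_fn M X \<rho> I pstar x \<ge> value_fn M X \<rho> I p x)
         \<longleftrightarrow>
         ((\<forall>p\<in>open_int l r. p < pstar \<longrightarrow> (p - I) / \<psi> p \<le> (pstar - I) / \<psi> pstar) \<and>
          (\<forall>p\<in>open_int l r. \<forall>q\<in>open_int l r. pstar \<le> p \<longrightarrow> p \<le> q \<longrightarrow>
              (q - I) / \<psi> q \<le> (p - I) / \<psi> p))"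
proof -
  let ?O = "open_int l r"
  define f where "f q = (q - I) / \<psi> q" for q
  have value_eq: "value_fn M X \<rho> I p x = \<psi> x * f (max p x)" if "x \<in> ?O" "p \<in> ?O" for p x
  proof -
    have "value_fn M X \<rho> I p x = (if p \<le> x then x - I else (p - I) * (\<psi> x / \<psi> p))"
      unfolding value_fn_def
      by (rule value_of_threshold) (use prob meas cont_paths start laplace that in \<open>auto simp: discount_def\<close>)
    then show ?thesis using psi_pos that by (auto simp: f_def max_def)
  qed
  have "(\<forall>p\<in>?O. \<forall>x\<in>?O. value_fn M X \<rho> I pstar x \<ge> value_fn M X \<rho> I p x) \<longleftrightarrow>
        (\<forall>p\<in>?O. \<forall>x\<in>?O. f (max p x) \<le> f (max pstar x))"
    using value_eq psi_pos pstar_in by (auto simp: mult_le_cancel_left_pos)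
  also have "\<dots> \<longleftrightarrow> (\<forall>p\<in>?O. p < pstar \<longrightarrow> f p \<le> f pstar) \<and>
                     (\<forall>p\<in>?O. \<forall>q\<in>?O. pstar \<le> p \<longrightarrow> p \<le> q \<longrightarrow> f q \<le> f p)"
    by (rule threshold_max_optimal_iff[OF pstar_in])
  finally show ?thesis unfolding f_def .
qed

end
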